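(* Let $G$ be a connected graph of order at least three. If $D$ is a $\gamma_{\rm cer}$-set of $G$ and $D\cap L_G\neq\emptyset$, then $D$ is not a $\gamma$-set of $G$. Equivalently, if $D$ is a $\gamma_{\rm cer}$-set of $G$ and $\gamma(G)=\gamma_{\rm cer}(G)$, then $L_G\cap D=\emptyset$ and $S_G\subseteq D$.
   Context: All graphs are finite and simple. $L_G$ is the set of leaves (vertices of degree one) of $G$ and $S_G$ is the set of supports (vertices adjacent to a leaf). A set $D\subseteq V_G$ is a dominating set of $G$ if every vertex of $V_G-D$ has a neighbor in $D$; $\gamma(G)$ is the minimum cardinality of a dominating set, and a $\gamma$-set is a dominating set of cardinality $\gamma(G)$. A set $D\subseteq V_G$ is a certified dominating set of $G$ if $D$ is a dominating set of $G$ and every vertex of $D$ has either zero or at least two neighbors in $V_G-D$; $\gamma_{\rm cer}(G)$ is the minimum cardinality of a certified dominating set, and a $\gamma_{\rm cer}$-set is a certified dominating set of cardinality $\gamma_{\rm cer}(G)$. *)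

theory Defs
  imports Main
begin

definition simple_graph :: "'a set \<Rightarrow> ('a \<Rightarrow> 'a \<Rightarrow> bool) \<Rightarrow> bool" where
  "simple_graph V E \<longleftrightarrow> finite V \<and> (\<forall>u v. E u v \<longrightarrow> u \<in> V \<and> v \<in> V)
     \<and> (\<forall>u v. E u v \<longrightarrow> E v u) \<and> (\<forall>v. \<not> E v v)"

definition connected_graph :: "'a set \<Rightarrow> ('a \<Rightarrow> 'a \<Rightarrow> bool) \<Rightarrow> bool" where
  "connected_graph V E \<longleftrightarrow> V \<noteq> {} \<and>
     (\<forall>u\<in>V. \<forall>v\<in>V. (u, v) \<in> {(x, y). x \<in> V \<and> y \<in> V \<and> E x y}\<^sup>*)"

definition nbhd :: "'a set \<Rightarrow> ('a \<Rightarrow> 'a \<Rightarrow> bool) \<Rightarrow> 'a \<Rightarrow> 'a set" where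
  "nbhd V E v = {u \<in> V. E v u}"

definition leaves :: "'a set \<Rightarrow> ('a \<Rightarrow> 'a \<Rightarrow> bool) \<Rightarrow> 'a set" where
  "leaves V E = {v \<in> V. card (nbhd V E v) = 1}"

definition supports :: "'a set \<Rightarrow> ('a \<Rightarrow> 'a \<Rightarrow> bool) \<Rightarrow> 'a set" where
  "supports V E = {v \<in> V. \<exists>u \<in> leaves V E. E v u}"

definition dominating_set :: "'a set \<Rightarrow> ('a \<Rightarrow> 'a \<Rightarrow> bool) \<Rightarrow> 'a set \<Rightarrow> bool" where
  "dominating_set V E D \<longleftrightarrow> D \<subseteq> V \<and> (\<forall>v \<in> V - D. \<exists>u \<in> D. E v u)"

definition certified_dominating_set :: "'a set \<Rightarrow> ('a \<Rightarrow> 'a \<Rightarrow> bool) \<Rightarrow> 'a set \<Rightarrow> bool" where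
  "certified_dominating_set V E D \<longleftrightarrow> dominating_set V E D \<and>
     (\<forall>v \<in> D. card (nbhd V E v \<inter> (V - D)) = 0 \<or> card (nbhd V E v \<inter> (V - D)) \<ge> 2)"

definition domination_number :: "'a set \<Rightarrow> ('a \<Rightarrow> 'a \<Rightarrow> bool) \<Rightarrow> nat" where
  "domination_number V E = Min {card D | D. dominating_set V E D}"

definition cer_domination_number :: "'a set \<Rightarrow> ('a \<Rightarrow> 'a \<Rightarrow> bool) \<Rightarrow> nat" where
  "cer_domination_number V E = Min {card D | D. certified_dominating_set V E D}"

definition gamma_set :: "'a set \<Rightarrow> ('a \<Rightarrow> 'a \<Rightarrow> bool) \<Rightarrow> 'a set \<Rightarrow> bool" where
  "gamma_set V E D \<longleftrightarrow> dominating_set V E D \<and> card D = domination_number V E"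

definition gamma_cer_set :: "'a set \<Rightarrow> ('a \<Rightarrow> 'a \<Rightarrow> bool) \<Rightarrow> 'a set \<Rightarrow> bool" where
  "gamma_cer_set V E D \<longleftrightarrow> certified_dominating_set V E D \<and> card D = cer_domination_number V E"

end

theory Submission
  imports Defs
begin

text \<open>A leaf x in a certified dominating set D has its unique neighbour s in D, since otherwise
  x would have exactly one neighbour outside D. But then x is superfluous: s dominates x, and
  no vertex outside D is adjacent to x. So D - {x} dominates and D is not minimum. Conversely,
  if a minimum certified dominating set is also a \<gamma>-set, it contains no leaf, and each leaf,
  being dominated, has its support in D.\<close>

lemma leaf_nbhd_singleton:
  assumes "x \<in> leaves V E"
  obtains s where "nbhd V E x = {s}"
  using assms unfolding leaves_def by (auto simp: card_Suc_eq)

lemma domination_number_le_card: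
  assumes "finite V" and "dominating_set V E D"
  shows "domination_number V E \<le> card D"
proof -
  have "{card D | D. dominating_set V E D} \<subseteq> {..card V}"
    using assms(1) by (auto simp: dominating_set_def card_mono)
  then have "finite {card D | D. dominating_set V E D}"
    by (rule finite_subset) simp
  then show ?thesis
    unfolding domination_number_def using assms(2) by (auto intro: Min_le)
qed

lemma certified_dominating_set_unique_neighbour_mem:
  assumes "certified_dominating_set V E D" and "x \<in> D" and "nbhd V E x = {s}"
  shows "s \<in> D"
proof (rule ccontr)
  assume "s \<notin> D"
  then have "nbhd V E x \<inter> (V - D) = {s}"
    using assms(3) by (auto simp: nbhd_def)
  then show False
    using assms(1,2) by (auto simp: certified_dominating_set_def)
qed

lemma dominating_set_Diff_leaf:
  assumes "simple_graph V E" and "dominating_set V E D"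
    and "x \<in> D" and "nbhd V E x = {s}" and "s \<in> D"
  shows "dominating_set V E (D - {x})"
  unfolding dominating_set_def
proof (intro conjI ballI)
  show "D - {x} \<subseteq> V"
    using assms(2) by (auto simp: dominating_set_def)
next
  have sym: "E u v \<Longrightarrow> E v u" for u v
    using assms(1) by (auto simp: simple_graph_def)
  have Exs: "E x s" and "s \<noteq> x"
    using assms(1,4) by (auto simp: nbhd_def simple_graph_def)
  fix v assume v: "v \<in> V - (D - {x})"
  show "\<exists>u\<in>D - {x}. E v u"
  proof (cases "v = x")
    case True
    then show ?thesis using Exs \<open>s \<noteq> x\<close> assms(5) by auto
  next
    case False
    with v obtain u where u: "u \<in> D" "E v u"
      using assms(2) by (auto simp: dominating_set_def)
    have "u \<noteq> x"
    proof
      assume "u = x"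
      then have "v \<in> nbhd V E x" using v sym[OF u(2)] by (simp add: nbhd_def)
      then show False using assms(4,5) v \<open>v \<noteq> x\<close> by auto
    qed
    then show ?thesis using u by auto
  qed
qed

lemma certified_dominating_set_with_leaf_not_gamma_set:
  assumes "simple_graph V E" and "certified_dominating_set V E D" and "x \<in> D \<inter> leaves V E"
  shows "\<not> gamma_set V E D"
proof
  assume gamma: "gamma_set V E D"
  have "x \<in> D" and "x \<in> leaves V E"
    using assms(3) by auto
  obtain s where s: "nbhd V E x = {s}"
    using \<open>x \<in> leaves V E\<close> by (rule leaf_nbhd_singleton)
  from \<open>x \<in> D\<close> have "s \<in> D"
    using certified_dominating_set_unique_neighbour_mem[OF assms(2) _ s] by blast
  then have "dominating_set V E (D - {x})"
    using dominating_set_Diff_leaf[OF assms(1) _ \<open>x \<in> D\<close> s] gamma by (simp add: gamma_set_def)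
  moreover have "finite V"
    using assms(1) by (simp add: simple_graph_def)
  ultimately have "domination_number V E \<le> card (D - {x})"
    by (rule domination_number_le_card[rotated])
  moreover have "card (D - {x}) < card D"
  proof (rule card_Diff1_less)
    show "finite D"
      using gamma finite_subset[OF _ \<open>finite V\<close>] by (auto simp: gamma_set_def dominating_set_def)
    show "x \<in> D" by fact
  qed
  ultimately show False
    using gamma by (simp add: gamma_set_def)
qed

lemma dominating_set_leaf_free_contains_supports:
  assumes "simple_graph V E" and "dominating_set V E D" and "leaves V E \<inter> D = {}"
  shows "supports V E \<subseteq> D"
proof
  fix s assume "s \<in> supports V E"
  then obtain x where x: "x \<in> leaves V E" "E s x" "s \<in> V"
    by (auto simp: supports_def)
  obtain t where t: "nbhd V E x = {t}"
    using x(1) by (rule leaf_nbhd_singleton)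
  have "x \<in> V - D"
    using x assms(3) by (auto simp: leaves_def)
  then obtain u where u: "u \<in> D" "E x u"
    using assms(2) by (auto simp: dominating_set_def)
  have "s \<in> nbhd V E x" and "u \<in> nbhd V E x"
    using x u assms(1,2) by (auto simp: nbhd_def simple_graph_def dominating_set_def)
  then show "s \<in> D"
    using t u by auto
qed

theorem lemma2p10:
  fixes V :: "'a set" and E :: "'a \<Rightarrow> 'a \<Rightarrow> bool"
  assumes "simple_graph V E" and "connected_graph V E" and "card V \<ge> 3"
  shows "(\<forall>D. gamma_cer_set V E D \<and> D \<inter> leaves V E \<noteq> {} \<longrightarrow> \<not> gamma_set V E D)
    \<and> (\<forall>D. gamma_cer_set V E D \<and> domination_number V E = cer_domination_number V E
          \<longrightarrow> leaves V E \<inter> D = {} \<and> supports V E \<subseteq> D)"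
proof (intro conjI allI impI)
  fix D assume "gamma_cer_set V E D \<and> D \<inter> leaves V E \<noteq> {}"
  then show "\<not> gamma_set V E D"
    using certified_dominating_set_with_leaf_not_gamma_set[OF assms(1)]
    by (auto simp: gamma_cer_set_def)
next
  fix D assume D: "gamma_cer_set V E D \<and> domination_number V E = cer_domination_number V E"
  then have "gamma_set V E D"
    by (auto simp: gamma_set_def gamma_cer_set_def certified_dominating_set_def)
  then show leaf_free: "leaves V E \<inter> D = {}"
    using D certified_dominating_set_with_leaf_not_gamma_set[OF assms(1)]
    by (auto simp: gamma_cer_set_def)
  show "supports V E \<subseteq> D"
    using dominating_set_leaf_free_contains_supports[OF assms(1) _ leaf_free] D
    by (auto simp: gamma_cer_set_def certified_dominating_set_def)
qed

end
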